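(* Let $n\ge2$, let $G$ be an absolutely continuous distribution function on $[0,\infty)$, and $\alpha_1,\dots,\alpha_n,\alpha^*_1,\dots,\alpha^*_n>0$. Let $\phi_1,\phi_2$ be Archimedean generators with pseudo-inverses $\psi_1,\psi_2$. Let $\boldsymbol{X}=(X_1,\dots,X_n)$ have joint distribution function $\phi_1\big(\sum_{i=1}^n\psi_1([G(x_i)]^{\alpha_i})\big)$ and $\boldsymbol{X}^*$ have joint distribution function $\phi_2\big(\sum_{i=1}^n\psi_2([G(x_i)]^{\alpha^*_i})\big)$ (proportional reversed hazard marginals with Archimedean copulas). If $\phi_1$ or $\phi_2$ is log-convex, $\psi_2\circ\phi_1$ is super-additive, and $\prod_{i=1}^{j}\alpha^*_{[i]}\le\prod_{i=1}^{j}\alpha_{[i]}$ for all $j=1,\dots,n$, then $X_{n:n}\ge_{\rm st}X^*_{n:n}$.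
   Context: An Archimedean generator is an $n$-monotone function $\phi:[0,\infty)\to[0,1]$ with $\phi(0)=1$, $\lim_{x\to\infty}\phi(x)=0$ ($n$-monotone: $(-1)^k\phi^{(k)}\ge0$ for $k=0,\dots,n-2$ and $(-1)^{n-2}\phi^{(n-2)}$ decreasing and convex); $\psi=\phi^{-1}$ is its pseudo-inverse. $h$ super-additive means $h(x+y)\ge h(x)+h(y)$ for $x,y\ge0$. $\alpha_{[1]}\ge\dots\ge\alpha_{[n]}$ are the components in decreasing order. $X_{n:n}=\max_i X_i$. $X\le_{\rm st}Y$ means $P(X>x)\le P(Y>x)$ for all $x$. *)

theory Defs
  imports "HOL-Probability.Probability"
begin

definition n_monotone_pos :: "nat \<Rightarrow> (real \<Rightarrow> real) \<Rightarrow> bool" where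
  "n_monotone_pos n f \<longleftrightarrow>
     (\<forall>k < n - 2. \<forall>x > 0. ((deriv ^^ k) f) differentiable (at x)) \<and>
     (\<forall>k \<le> n - 2. \<forall>x > 0. (-1) ^ k * (deriv ^^ k) f x \<ge> 0) \<and>
     antimono_on {0<..} (\<lambda>x. (-1) ^ (n - 2) * (deriv ^^ (n - 2)) f x) \<and>
     convex_on {0<..} (\<lambda>x. (-1) ^ (n - 2) * (deriv ^^ (n - 2)) f x)"

definition archimedean_generator :: "nat \<Rightarrow> (real \<Rightarrow> real) \<Rightarrow> bool" where
  "archimedean_generator n \<phi> \<longleftrightarrow>
     continuous_on {0..} \<phi> \<and> n_monotone_pos n \<phi> \<and>
     (\<forall>x \<ge> 0. 0 \<le> \<phi> x \<and> \<phi> x \<le> 1) \<and> \<phi> 0 = 1 \<and> (\<phi> \<longlongrightarrow> 0) at_top"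

text \<open>Pseudo-inverse psi(t) = inf{u \<ge> 0. phi u \<le> t}, valued in the extended reals
  (psi 0 = \<infinity> for strict generators).\<close>
definition pseudo_inv :: "(real \<Rightarrow> real) \<Rightarrow> real \<Rightarrow> ereal" where
  "pseudo_inv \<phi> t = Inf (ereal ` {u. 0 \<le> u \<and> \<phi> u \<le> t})"

definition gen_eval :: "(real \<Rightarrow> real) \<Rightarrow> ereal \<Rightarrow> real" where
  "gen_eval \<phi> z = (if z = \<infinity> then 0 else \<phi> (real_of_ereal z))"

definition log_convex :: "(real \<Rightarrow> real) \<Rightarrow> bool" where
  "log_convex \<phi> \<longleftrightarrow> (\<forall>x \<ge> 0. \<phi> x > 0) \<and> convex_on {0..} (\<lambda>x. ln (\<phi> x))"

definition super_additive :: "(real \<Rightarrow> ereal) \<Rightarrow> bool" where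
  "super_additive h \<longleftrightarrow> (\<forall>x \<ge> 0. \<forall>y \<ge> 0. h x + h y \<le> h (x + y))"

definition abs_cont_cdf_nonneg :: "(real \<Rightarrow> real) \<Rightarrow> bool" where
  "abs_cont_cdf_nonneg G \<longleftrightarrow>
     (\<exists>g. (\<forall>x. 0 \<le> g x) \<and> (g has_integral 1) UNIV \<and> (\<forall>x. (g has_integral G x) {..x})) \<and>
     (\<forall>x < 0. G x = 0)"

definition dec_arr :: "nat \<Rightarrow> (nat \<Rightarrow> real) \<Rightarrow> real list" where
  "dec_arr n \<alpha> = rev (sort (map \<alpha> [0..<n]))"

end

theory Submission
  imports Defs
begin

text \<open>The survival function of the maximum is 1 - C(G(t)^alpha_1, ..., G(t)^alpha_n), so it
  suffices to compare the copulas at the points u^alpha and u^alpha* for 0 <= u <= 1.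
  Super-additivity of psi2 o phi1 gives C_phi1 <= C_phi2 pointwise.  If phi is log-convex, then
  s |-> psi(u^exp s) is convex and increasing; the product conditions say that ln alpha weakly
  submajorizes ln alpha*, so the Tomic-Weyl inequality gives
  sum psi(u^alpha*_i) <= sum psi(u^alpha_i), and since phi decreases, C_phi at u^alpha is at most
  C_phi at u^alpha*.  The two comparisons chain in either order, whichever generator is
  log-convex.\<close>

lemma sum_mult_nonneg_of_partial_sums_nonneg:
  fixes c d :: "nat \<Rightarrow> real"
  assumes antimono: "\<And>i. Suc i < n \<Longrightarrow> c (Suc i) \<le> c i"
    and nonneg: "\<And>i. i < n \<Longrightarrow> 0 \<le> c i"
    and partial_sums: "\<And>m. m \<le> n \<Longrightarrow> 0 \<le> (\<Sum>i<m. d i)"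
  shows "0 \<le> (\<Sum>i<n. c i * d i)"
proof -
  have abel: "c m * (\<Sum>i<m. d i) \<le> (\<Sum>i<m. c i * d i)" if "m < n" for m
    using that
  proof (induction m)
    case (Suc m)
    have "c (Suc m) * (\<Sum>i<Suc m. d i) \<le> c m * (\<Sum>i<Suc m. d i)"
      using antimono[of m] partial_sums[of "Suc m"] Suc.prems by (intro mult_right_mono) auto
    also have "\<dots> = c m * (\<Sum>i<m. d i) + c m * d m" by (simp add: algebra_simps)
    also have "\<dots> \<le> (\<Sum>i<m. c i * d i) + c m * d m" using Suc by simp
    finally show ?case by simp
  qed simp
  show ?thesis
  proof (cases n)
    case (Suc k)
    have "0 \<le> c k * (\<Sum>i<Suc k. d i)" using nonneg[of k] partial_sums[of "Suc k"] Suc by simp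
    also have "\<dots> = c k * (\<Sum>i<k. d i) + c k * d k" by (simp add: algebra_simps)
    also have "\<dots> \<le> (\<Sum>i<k. c i * d i) + c k * d k" using abel[of k] Suc by simp
    finally show ?thesis using Suc by simp
  qed simp
qed

lemma convex_slope_le_slope:
  fixes F :: "real \<Rightarrow> real"
  assumes cvx: "convex_on UNIV F" and "x < y" "y < t"
  shows "(F y - F x) / (y - x) \<le> (F t - F y) / (t - y)"
proof -
  have "(F x - F y) / (x - y) \<le> (F x - F t) / (x - t)"
    and "(F x - F t) / (x - t) \<le> (F y - F t) / (y - t)"
    using convex_on_slope_le[OF cvx, of x t y] assms by auto
  moreover have "(F y - F x) / (y - x) = (F x - F y) / (x - y)"
    and "(F t - F y) / (t - y) = (F y - F t) / (y - t)"
    by (metis minus_diff_eq minus_divide_divide)+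
  ultimately show ?thesis by linarith
qed

definition support_slope :: "(real \<Rightarrow> real) \<Rightarrow> real \<Rightarrow> real" where
  "support_slope F y = Inf ((\<lambda>t. (F t - F y) / (t - y)) ` {y<..})"

lemma
  fixes F :: "real \<Rightarrow> real"
  assumes cvx: "convex_on UNIV F"
  shows support_slope_le: "y < t \<Longrightarrow> support_slope F y \<le> (F t - F y) / (t - y)"
    and le_support_slope: "x < y \<Longrightarrow> (F y - F x) / (y - x) \<le> support_slope F y"
proof -
  have bdd: "bdd_below ((\<lambda>t. (F t - F y) / (t - y)) ` {y<..})"
    unfolding bdd_below_def using convex_slope_le_slope[OF cvx, of "y - 1" y] by auto
  show "y < t \<Longrightarrow> support_slope F y \<le> (F t - F y) / (t - y)"
    unfolding support_slope_def by (rule cInf_lower[OF _ bdd]) auto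
  show "x < y \<Longrightarrow> (F y - F x) / (y - x) \<le> support_slope F y"
    unfolding support_slope_def
    by (rule cInf_greatest) (auto intro: convex_slope_le_slope[OF cvx] simp: gt_ex)
qed

lemma convex_above_support_line:
  fixes F :: "real \<Rightarrow> real"
  assumes cvx: "convex_on UNIV F"
  shows "F y + support_slope F y * (x - y) \<le> F x"
proof (cases x y rule: linorder_cases)
  case less
  with le_support_slope[OF cvx less] have "F y - F x \<le> support_slope F y * (y - x)"
    by (simp add: divide_le_eq)
  then show ?thesis by (simp add: algebra_simps)
next
  case greater
  with support_slope_le[OF cvx greater] have "support_slope F y * (x - y) \<le> F x - F y"
    by (simp add: le_divide_eq)
  then show ?thesis by simp
qed simp

lemma support_slope_mono:
  fixes F :: "real \<Rightarrow> real"
  assumes cvx: "convex_on UNIV F" and "x \<le> y"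
  shows "support_slope F x \<le> support_slope F y"
proof (cases "x = y")
  case False
  with assms have "x < y" by simp
  with support_slope_le[OF cvx this] le_support_slope[OF cvx this] show ?thesis by linarith
qed simp

lemma support_slope_nonneg:
  fixes F :: "real \<Rightarrow> real"
  assumes cvx: "convex_on UNIV F" and "mono F"
  shows "0 \<le> support_slope F y"
proof -
  have "0 \<le> (F y - F (y - 1)) / (y - (y - 1))"
    using \<open>mono F\<close> by (simp add: mono_def)
  also have "\<dots> \<le> support_slope F y" by (rule le_support_slope[OF cvx]) simp
  finally show ?thesis .
qed

lemma sum_convex_mono_le_of_weak_majorization:
  fixes F :: "real \<Rightarrow> real" and x y :: "nat \<Rightarrow> real"
  assumes cvx: "convex_on UNIV F" and "mono F"
    and y_antimono: "\<And>i j. i \<le> j \<Longrightarrow> j < n \<Longrightarrow> y j \<le> y i"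
    and partial_sums: "\<And>m. m \<le> n \<Longrightarrow> (\<Sum>i<m. y i) \<le> (\<Sum>i<m. x i)"
  shows "(\<Sum>i<n. F (y i)) \<le> (\<Sum>i<n. F (x i))"
proof -
  have "0 \<le> (\<Sum>i<n. support_slope F (y i) * (x i - y i))"
  proof (rule sum_mult_nonneg_of_partial_sums_nonneg)
    fix i assume "Suc i < n"
    then show "support_slope F (y (Suc i)) \<le> support_slope F (y i)"
      using y_antimono[of i "Suc i"] by (intro support_slope_mono[OF cvx]) auto
  next
    fix m assume "m \<le> n"
    then show "0 \<le> (\<Sum>i<m. x i - y i)" using partial_sums[of m] by (simp add: sum_subtractf)
  qed (rule support_slope_nonneg[OF cvx \<open>mono F\<close>])
  also have "\<dots> \<le> (\<Sum>i<n. F (x i) - F (y i))"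
    using convex_above_support_line[OF cvx] by (intro sum_mono) (simp add: algebra_simps)
  finally show ?thesis by (simp add: sum_subtractf)
qed

lemma length_dec_arr [simp]: "length (dec_arr n a) = n"
  by (simp add: dec_arr_def)

lemma dec_arr_antimono:
  assumes "i \<le> j" "j < n"
  shows "dec_arr n a ! j \<le> dec_arr n a ! i"
proof -
  define s where "s = sort (map a [0..<n])"
  have "sorted s" "length s = n" by (simp_all add: s_def)
  then have "s ! (n - Suc j) \<le> s ! (n - Suc i)"
    using assms by (intro sorted_nth_mono) auto
  with \<open>length s = n\<close> show ?thesis using assms by (simp add: dec_arr_def s_def[symmetric] rev_nth)
qed

lemma sum_dec_arr: "(\<Sum>i<n. h (dec_arr n a ! i)) = (\<Sum>i<n. h (a i))"
proof -
  have "mset (dec_arr n a) = mset (map a [0..<n])" by (simp add: dec_arr_def)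
  then have "sum_list (map h (dec_arr n a)) = sum_list (map h (map a [0..<n]))"
    by (metis mset_map sum_mset_sum_list)
  then show ?thesis
    by (simp add: sum_list_sum_nth interv_sum_list_conv_sum_set_nat atLeast0LessThan)
qed

lemma dec_arr_pos:
  assumes "\<forall>i<n. a i > 0" "i < n"
  shows "dec_arr n a ! i > 0"
proof -
  have "dec_arr n a ! i \<in> set (dec_arr n a)" using assms by simp
  also have "set (dec_arr n a) = a ` {..<n}" by (auto simp: dec_arr_def)
  finally show ?thesis using assms by auto
qed

lemma prod_list_take_dec_arr:
  assumes "j \<le> n"
  shows "prod_list (take j (dec_arr n a)) = (\<Prod>i<j. dec_arr n a ! i)"
  using assms by (simp add: prod.list_conv_set_nth atLeast0LessThan min_def)

lemma sum_ln_prefix_dec_arr: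
  assumes "\<forall>i<n. a i > 0" "j \<le> n"
  shows "(\<Sum>i<j. ln (dec_arr n a ! i)) = ln (prod_list (take j (dec_arr n a)))"
proof -
  have "\<And>i. i \<in> {..<j} \<Longrightarrow> dec_arr n a ! i \<noteq> 0"
    using dec_arr_pos[OF assms(1)] assms(2) by (metis lessThan_iff less_le_trans order_less_irrefl)
  then show ?thesis unfolding prod_list_take_dec_arr[OF assms(2)] by (subst ln_prod) auto
qed

lemma sum_convex_mono_ln_le_of_prod_dominance:
  fixes F :: "real \<Rightarrow> real" and \<alpha> \<alpha>s :: "nat \<Rightarrow> real"
  assumes cvx: "convex_on UNIV F" and "mono F"
    and \<alpha>: "\<forall>i<n. \<alpha> i > 0" and \<alpha>s: "\<forall>i<n. \<alpha>s i > 0"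
    and prod_dom: "\<forall>j\<in>{1..n}. prod_list (take j (dec_arr n \<alpha>s)) \<le> prod_list (take j (dec_arr n \<alpha>))"
  shows "(\<Sum>i<n. F (ln (\<alpha>s i))) \<le> (\<Sum>i<n. F (ln (\<alpha> i)))"
proof -
  have "(\<Sum>i<n. F (ln (dec_arr n \<alpha>s ! i))) \<le> (\<Sum>i<n. F (ln (dec_arr n \<alpha> ! i)))"
  proof (rule sum_convex_mono_le_of_weak_majorization[OF cvx \<open>mono F\<close>])
    fix i j assume "i \<le> j" "j < n"
    then show "ln (dec_arr n \<alpha>s ! j) \<le> ln (dec_arr n \<alpha>s ! i)"
      using dec_arr_antimono[of i j n \<alpha>s] dec_arr_pos[OF \<alpha>s] by simp
  next
    fix m assume m: "m \<le> n"
    show "(\<Sum>i<m. ln (dec_arr n \<alpha>s ! i)) \<le> (\<Sum>i<m. ln (dec_arr n \<alpha> ! i))"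
    proof (cases "m = 0")
      case False
      with m prod_dom have "prod_list (take m (dec_arr n \<alpha>s)) \<le> prod_list (take m (dec_arr n \<alpha>))"
        by simp
      moreover have "0 < prod_list (take m (dec_arr n \<alpha>s))"
        unfolding prod_list_take_dec_arr[OF m] using m dec_arr_pos[OF \<alpha>s] by (intro prod_pos) auto
      ultimately show ?thesis
        using m by (simp add: sum_ln_prefix_dec_arr[OF \<alpha>s] sum_ln_prefix_dec_arr[OF \<alpha>])
    qed simp
  qed
  then show ?thesis
    using sum_dec_arr[where h="\<lambda>v. F (ln v)" and a=\<alpha>] sum_dec_arr[where h="\<lambda>v. F (ln v)" and a=\<alpha>s]
    by simp
qed

lemma archimedean_generatorD:
  assumes "archimedean_generator n \<phi>"
  shows "continuous_on {0..} \<phi>" "(\<phi> \<longlongrightarrow> 0) at_top" "\<phi> 0 = 1"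
    "\<And>x. 0 \<le> x \<Longrightarrow> 0 \<le> \<phi> x" "\<And>x. 0 \<le> x \<Longrightarrow> \<phi> x \<le> 1"
  using assms by (auto simp: archimedean_generator_def)

lemma archimedean_generator_antimono:
  fixes \<phi> :: "real \<Rightarrow> real"
  assumes gen: "archimedean_generator n \<phi>" and "n \<ge> 2" and "0 < x" "x \<le> y"
  shows "\<phi> y \<le> \<phi> x"
proof (cases "n = 2")
  case True
  with gen have "antimono_on {0<..} \<phi>"
    by (simp add: archimedean_generator_def n_monotone_pos_def)
  then show ?thesis using assms by (auto simp: monotone_on_def)
next
  case False
  with \<open>n \<ge> 2\<close> have "0 < n - 2" "1 \<le> n - 2" by auto
  with gen have diff: "\<And>z. z > 0 \<Longrightarrow> \<phi> differentiable (at z)"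
    and deriv_nonpos: "\<And>z. z > 0 \<Longrightarrow> (-1) ^ 1 * (deriv ^^ 1) \<phi> z \<ge> 0"
    unfolding archimedean_generator_def n_monotone_pos_def by (metis funpow_0, blast)
  show ?thesis
  proof (rule DERIV_nonpos_imp_nonincreasing[OF \<open>x \<le> y\<close>])
    fix z assume "x \<le> z" "z \<le> y"
    with \<open>0 < x\<close> have "z > 0" by simp
    then show "\<exists>d. DERIV \<phi> z :> d \<and> d \<le> 0"
      using diff deriv_nonpos DERIV_deriv_iff_real_differentiable[of \<phi> z] by auto
  qed
qed

lemma pseudo_inv_nonneg: "0 \<le> pseudo_inv \<phi> v"
  unfolding pseudo_inv_def by (rule Inf_greatest) auto

text \<open>The infimum defining psi(v) is attained by continuity, and phi(psi(v)) = v by the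
  intermediate value theorem on [0, psi(v)].\<close>
lemma pseudo_inv_attained:
  fixes \<phi> :: "real \<Rightarrow> real" and v :: real
  defines "p \<equiv> real_of_ereal (pseudo_inv \<phi> v)"
  assumes cont: "continuous_on {0..} \<phi>" and "\<phi> 0 = 1" "v \<le> 1" and "\<exists>x\<ge>0. \<phi> x \<le> v"
  shows "pseudo_inv \<phi> v = ereal p" "0 \<le> p" "\<phi> p = v" "\<And>x. 0 \<le> x \<Longrightarrow> \<phi> x \<le> v \<Longrightarrow> p \<le> x"
proof -
  define S where "S = {u. 0 \<le> u \<and> \<phi> u \<le> v}"
  have "S \<noteq> {}" using assms by (auto simp: S_def)
  have "closed S"
  proof -
    have "closed {x \<in> {0..}. \<phi> x \<le> (\<lambda>_. v) x}"
      by (rule continuous_on_closed_Collect_le[OF cont continuous_on_const]) simp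
    moreover have "{x \<in> {0..}. \<phi> x \<le> (\<lambda>_. v) x} = S" by (auto simp: S_def)
    ultimately show ?thesis by simp
  qed
  have bdd: "bdd_below S" by (auto simp: S_def bdd_below_def)
  have InfS: "Inf S \<in> S" by (rule closed_contains_Inf[OF \<open>S \<noteq> {}\<close> bdd \<open>closed S\<close>])
  have Inf_le: "\<And>x. x \<in> S \<Longrightarrow> Inf S \<le> x" by (rule cInf_lower[OF _ bdd])
  have eq: "pseudo_inv \<phi> v = ereal (Inf S)"
    unfolding pseudo_inv_def S_def[symmetric]
    by (rule antisym) (use InfS Inf_le in \<open>auto intro: Inf_lower Inf_greatest\<close>)
  then have p: "p = Inf S" by (simp add: p_def)
  with eq show "pseudo_inv \<phi> v = ereal p" by simp
  show "0 \<le> p" "\<And>x. 0 \<le> x \<Longrightarrow> \<phi> x \<le> v \<Longrightarrow> p \<le> x"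
    using InfS Inf_le by (auto simp: p S_def)
  have "\<phi> p \<le> v" using InfS by (simp add: p S_def)
  moreover have "\<exists>x\<ge>0. x \<le> p \<and> \<phi> x = v"
    by (rule IVT2') (use \<open>\<phi> p \<le> v\<close> \<open>0 \<le> p\<close> assms in \<open>auto intro: continuous_on_subset[OF cont]\<close>)
  then obtain x where "0 \<le> x" "x \<le> p" "\<phi> x = v" by blast
  moreover have "p \<le> x" using Inf_le \<open>0 \<le> x\<close> \<open>\<phi> x = v\<close> by (simp add: p S_def)
  ultimately show "\<phi> p = v" by simp
qed

lemma generator_pseudo_inv:
  fixes \<phi> :: "real \<Rightarrow> real" and v :: real
  defines "p \<equiv> real_of_ereal (pseudo_inv \<phi> v)"
  assumes gen: "archimedean_generator n \<phi>" and "0 < v" "v \<le> 1"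
  shows "pseudo_inv \<phi> v = ereal p" "0 \<le> p" "\<phi> p = v" "\<And>x. 0 \<le> x \<Longrightarrow> \<phi> x \<le> v \<Longrightarrow> p \<le> x"
proof -
  have "eventually (\<lambda>x. \<phi> x < v) at_top"
    using archimedean_generatorD(2)[OF gen] \<open>0 < v\<close> by (simp add: order_tendstoD(2))
  then obtain x0 where x0: "\<And>x. x \<ge> x0 \<Longrightarrow> \<phi> x < v"
    by (auto simp: eventually_at_top_linorder)
  have "\<exists>x\<ge>0. \<phi> x \<le> v" by (intro exI[of _ "max 0 x0"]) (simp add: less_imp_le x0)
  note attained = pseudo_inv_attained[OF archimedean_generatorD(1,3)[OF gen] \<open>v \<le> 1\<close> this]
  show "pseudo_inv \<phi> v = ereal p" "0 \<le> p" "\<phi> p = v" "\<And>x. 0 \<le> x \<Longrightarrow> \<phi> x \<le> v \<Longrightarrow> p \<le> x"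
    using attained unfolding p_def by blast+
qed

lemma gen_eval_ereal [simp]: "gen_eval \<phi> (ereal x) = \<phi> x"
  by (simp add: gen_eval_def)

lemma gen_eval_nonneg:
  assumes "archimedean_generator n \<phi>" "0 \<le> z"
  shows "0 \<le> gen_eval \<phi> z"
  using archimedean_generatorD(4)[OF assms(1)] assms(2)
  by (auto simp: gen_eval_def real_of_ereal_pos)

lemma sum_pseudo_inv_finite:
  assumes "archimedean_generator n \<phi>" and "\<And>i. i < m \<Longrightarrow> 0 < v i \<and> v i \<le> 1"
  shows "(\<Sum>i<m. pseudo_inv \<phi> (v i)) = ereal (\<Sum>i<m. real_of_ereal (pseudo_inv \<phi> (v i)))"
proof -
  have "(\<Sum>i<m. pseudo_inv \<phi> (v i)) = (\<Sum>i<m. ereal (real_of_ereal (pseudo_inv \<phi> (v i))))"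
    using generator_pseudo_inv(1)[OF assms(1)] assms(2) by (intro sum.cong) auto
  then show ?thesis by (simp add: sum_ereal)
qed

lemma super_additive_sum:
  fixes x :: "nat \<Rightarrow> real"
  assumes sa: "super_additive h" and "0 \<le> h 0" and "\<forall>i<m. 0 \<le> x i"
  shows "(\<Sum>i<m. h (x i)) \<le> h (\<Sum>i<m. x i)"
  using assms(3)
proof (induction m)
  case (Suc m)
  have "(\<Sum>i<Suc m. h (x i)) \<le> h (\<Sum>i<m. x i) + h (x m)"
    using Suc by (simp add: add_right_mono)
  also have "\<dots> \<le> h ((\<Sum>i<m. x i) + x m)"
    using sa Suc.prems sum_nonneg[of "{..<m}" x] unfolding super_additive_def by simp
  finally show ?case by simp
qed (simp add: \<open>0 \<le> h 0\<close>)

definition arch_copula :: "(real \<Rightarrow> real) \<Rightarrow> nat \<Rightarrow> (nat \<Rightarrow> real) \<Rightarrow> real" where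
  "arch_copula \<phi> m v = gen_eval \<phi> (\<Sum>i<m. pseudo_inv \<phi> (v i))"

lemma arch_copula_eq:
  assumes "archimedean_generator n \<phi>" and "\<And>i. i < m \<Longrightarrow> 0 < v i \<and> v i \<le> 1"
  shows "arch_copula \<phi> m v = \<phi> (\<Sum>i<m. real_of_ereal (pseudo_inv \<phi> (v i)))"
  unfolding arch_copula_def by (simp add: sum_pseudo_inv_finite[OF assms])

lemma arch_copula_le_of_super_additive:
  assumes g1: "archimedean_generator n \<phi>1" and g2: "archimedean_generator n \<phi>2" and "n \<ge> 2"
    and sa: "super_additive (\<lambda>x. pseudo_inv \<phi>2 (\<phi>1 x))"
    and v: "\<And>i. i < m \<Longrightarrow> 0 < v i \<and> v i \<le> 1"
  shows "arch_copula \<phi>1 m v \<le> arch_copula \<phi>2 m v"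
proof -
  define P1 where "P1 i = real_of_ereal (pseudo_inv \<phi>1 (v i))" for i
  define S where "S = (\<Sum>i<m. P1 i)"
  define T where "T = (\<Sum>i<m. real_of_ereal (pseudo_inv \<phi>2 (v i)))"
  have P1: "\<And>i. i < m \<Longrightarrow> 0 \<le> P1 i \<and> \<phi>1 (P1 i) = v i"
    using generator_pseudo_inv(2,3)[OF g1] v unfolding P1_def by blast
  have "0 \<le> S" unfolding S_def using P1 by (intro sum_nonneg) auto
  have "0 \<le> T" unfolding T_def using generator_pseudo_inv(2)[OF g2] v by (intro sum_nonneg) blast
  have C1: "arch_copula \<phi>1 m v = \<phi>1 S" and C2: "arch_copula \<phi>2 m v = \<phi>2 T"
    by (simp_all add: arch_copula_eq[OF g1 v] arch_copula_eq[OF g2 v] S_def P1_def T_def)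
  show ?thesis
  proof (cases "\<phi>1 S = 0")
    case True
    then show ?thesis using C1 C2 archimedean_generatorD(4)[OF g2 \<open>0 \<le> T\<close>] by simp
  next
    case False
    then have w: "0 < \<phi>1 S" "\<phi>1 S \<le> 1" using archimedean_generatorD(4,5)[OF g1 \<open>0 \<le> S\<close>] by auto
    define q where "q = real_of_ereal (pseudo_inv \<phi>2 (\<phi>1 S))"
    note q = generator_pseudo_inv(1,3)[OF g2 w, folded q_def]
    have "ereal T = (\<Sum>i<m. pseudo_inv \<phi>2 (v i))"
      using sum_pseudo_inv_finite[where m=m and v=v, OF g2 v] by (simp add: T_def)
    also have "\<dots> = (\<Sum>i<m. pseudo_inv \<phi>2 (\<phi>1 (P1 i)))"
      using P1 by (intro sum.cong) auto
    also have "\<dots> \<le> pseudo_inv \<phi>2 (\<phi>1 S)"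
      unfolding S_def by (rule super_additive_sum[OF sa]) (use P1 pseudo_inv_nonneg in auto)
    finally have "T \<le> q" using q(1) by simp
    have "\<phi>1 S \<le> \<phi>2 T"
    proof (cases "T = 0")
      case True then show ?thesis using archimedean_generatorD(3)[OF g2] w by simp
    next
      case False
      then show ?thesis
        using archimedean_generator_antimono[OF g2 \<open>n \<ge> 2\<close>, of T q] \<open>0 \<le> T\<close> \<open>T \<le> q\<close> q(2) by simp
    qed
    then show ?thesis using C1 C2 by simp
  qed
qed

lemma powr_pos_lt_one:
  fixes u a :: real
  assumes "0 < u" "u < 1" "0 < a"
  shows "0 < u powr a" "u powr a < 1"
  using assms powr_less_mono2[of a u 1] by auto

lemma mono_pseudo_inv_powr_exp:
  fixes \<phi> :: "real \<Rightarrow> real"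
  assumes gen: "archimedean_generator n \<phi>" and u: "0 < u" "u < 1"
  shows "mono (\<lambda>s. real_of_ereal (pseudo_inv \<phi> (u powr exp s)))"
proof (rule monoI)
  fix x y :: real assume "x \<le> y"
  have v: "0 < u powr exp s" "u powr exp s \<le> 1" for s
    using powr_pos_lt_one[OF u, of "exp s"] by auto
  have "\<phi> (real_of_ereal (pseudo_inv \<phi> (u powr exp y))) \<le> u powr exp x"
    using generator_pseudo_inv(3)[OF gen v[of y]] \<open>x \<le> y\<close> u by (simp add: powr_mono')
  then show "real_of_ereal (pseudo_inv \<phi> (u powr exp x)) \<le> real_of_ereal (pseudo_inv \<phi> (u powr exp y))"
    using generator_pseudo_inv(2,4)[OF gen v[of x]] generator_pseudo_inv(2)[OF gen v[of y]] by blast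
qed

lemma convex_pseudo_inv_powr_exp:
  fixes \<phi> :: "real \<Rightarrow> real"
  assumes gen: "archimedean_generator n \<phi>" and lc: "log_convex \<phi>" and u: "0 < u" "u < 1"
  shows "convex_on UNIV (\<lambda>s. real_of_ereal (pseudo_inv \<phi> (u powr exp s)))"
proof (rule convex_onI)
  define z where "z s = real_of_ereal (pseudo_inv \<phi> (u powr exp s))" for s
  have z: "0 \<le> z s" "\<phi> (z s) = u powr exp s" "\<And>x. 0 \<le> x \<Longrightarrow> \<phi> x \<le> u powr exp s \<Longrightarrow> z s \<le> x"
    for s
    using generator_pseudo_inv(2-4)[OF gen, of "u powr exp s"] powr_pos_lt_one[OF u, of "exp s"]
    unfolding z_def by auto
  have pos: "\<And>x. 0 \<le> x \<Longrightarrow> 0 < \<phi> x" and cv: "convex_on {0..} (\<lambda>x. ln (\<phi> x))"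
    using lc by (auto simp: log_convex_def)
  fix t x y :: real assume t: "0 < t" "t < 1"
  define p where "p = (1 - t) * z x + t * z y"
  have "0 \<le> p" unfolding p_def using z(1)[of x] z(1)[of y] t by simp
  have "ln (\<phi> p) \<le> (1 - t) * ln (\<phi> (z x)) + t * ln (\<phi> (z y))"
    using convex_onD[OF cv, of t "z x" "z y"] t z(1)[of x] z(1)[of y] by (simp add: p_def)
  also have "\<dots> = ln u * ((1 - t) * exp x + t * exp y)"
    using z(2)[of x] z(2)[of y] u by (simp add: ln_powr algebra_simps)
  also have "\<dots> \<le> ln u * exp ((1 - t) * x + t * y)"
    using convex_onD[OF exp_convex, of t x y] t u by (intro mult_left_mono_neg) auto
  also have "\<dots> = ln (u powr exp ((1 - t) * x + t * y))"
    using u by (simp add: ln_powr)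
  finally have "ln (\<phi> p) \<le> ln (u powr exp ((1 - t) * x + t * y))" .
  then have "\<phi> p \<le> u powr exp ((1 - t) * x + t * y)"
    by (subst (asm) ln_le_cancel_iff) (use pos[OF \<open>0 \<le> p\<close>] u in auto)
  then show "z ((1 - t) *\<^sub>R x + t *\<^sub>R y) \<le> (1 - t) * z x + t * z y"
    using z(3) \<open>0 \<le> p\<close> by (simp add: p_def)
qed simp

lemma arch_copula_powr_le_of_log_convex:
  fixes \<phi> :: "real \<Rightarrow> real" and \<alpha> \<alpha>s :: "nat \<Rightarrow> real"
  assumes gen: "archimedean_generator n \<phi>" and "n \<ge> 2" and lc: "log_convex \<phi>"
    and u: "0 < u" "u < 1" and \<alpha>: "\<forall>i<n. \<alpha> i > 0" and \<alpha>s: "\<forall>i<n. \<alpha>s i > 0"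
    and prod_dom: "\<forall>j\<in>{1..n}. prod_list (take j (dec_arr n \<alpha>s)) \<le> prod_list (take j (dec_arr n \<alpha>))"
  shows "arch_copula \<phi> n (\<lambda>i. u powr \<alpha> i) \<le> arch_copula \<phi> n (\<lambda>i. u powr \<alpha>s i)"
proof -
  define F where "F s = real_of_ereal (pseudo_inv \<phi> (u powr exp s))" for s
  define S where "S = (\<Sum>i<n. real_of_ereal (pseudo_inv \<phi> (u powr \<alpha> i)))"
  define T where "T = (\<Sum>i<n. real_of_ereal (pseudo_inv \<phi> (u powr \<alpha>s i)))"
  have "(\<Sum>i<n. F (ln (\<alpha>s i))) \<le> (\<Sum>i<n. F (ln (\<alpha> i)))"
    using convex_pseudo_inv_powr_exp[OF gen lc u] mono_pseudo_inv_powr_exp[OF gen u]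
    by (intro sum_convex_mono_ln_le_of_prod_dominance[OF _ _ \<alpha> \<alpha>s prod_dom]) (simp_all add: F_def)
  also have "(\<Sum>i<n. F (ln (\<alpha> i))) = S"
    using \<alpha> by (auto simp: F_def S_def intro: sum.cong)
  also have "(\<Sum>i<n. F (ln (\<alpha>s i))) = T"
    using \<alpha>s by (auto simp: F_def T_def intro: sum.cong)
  finally have "T \<le> S" .
  have v: "\<And>i. i < n \<Longrightarrow> 0 < u powr \<alpha> i \<and> u powr \<alpha> i \<le> 1"
    and vs: "\<And>i. i < n \<Longrightarrow> 0 < u powr \<alpha>s i \<and> u powr \<alpha>s i \<le> 1"
    using powr_pos_lt_one[OF u] \<alpha> \<alpha>s by (auto intro: less_imp_le)
  have "0 \<le> T" unfolding T_def using generator_pseudo_inv(2)[OF gen] vs by (intro sum_nonneg) blast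
  have "\<phi> S \<le> \<phi> T"
  proof (cases "T = 0")
    case True
    then show ?thesis using \<open>T \<le> S\<close> archimedean_generatorD(3,5)[OF gen] by simp
  next
    case False
    then show ?thesis
      using archimedean_generator_antimono[OF gen \<open>n \<ge> 2\<close>, of T S] \<open>0 \<le> T\<close> \<open>T \<le> S\<close> by simp
  qed
  then show ?thesis by (simp add: arch_copula_eq[OF gen v] arch_copula_eq[OF gen vs] S_def T_def)
qed

lemma arch_copula_zero:
  assumes gen: "archimedean_generator n \<phi>" and "n \<ge> 2"
  shows "arch_copula \<phi> n (\<lambda>_. 0) = 0"
proof (cases "\<exists>x\<ge>0. \<phi> x \<le> 0")
  case True
  define r where "r = real_of_ereal (pseudo_inv \<phi> 0)"
  note r = pseudo_inv_attained(1-3)[OF archimedean_generatorD(1,3)[OF gen] _ True, folded r_def]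
  have "0 < r" using r archimedean_generatorD(3)[OF gen] by (cases "r = 0") auto
  have "(\<Sum>i<n. pseudo_inv \<phi> 0) = ereal (real n * r)" using r(1) by (simp add: sum_ereal)
  moreover have "\<phi> (real n * r) \<le> \<phi> r"
    using \<open>n \<ge> 2\<close> \<open>0 < r\<close> by (intro archimedean_generator_antimono[OF gen \<open>n \<ge> 2\<close>]) auto
  moreover have "0 \<le> \<phi> (real n * r)" using \<open>0 < r\<close> by (intro archimedean_generatorD(4)[OF gen]) simp
  ultimately show ?thesis using r by (simp add: arch_copula_def)
next
  case False
  then have empty: "{u. 0 \<le> u \<and> \<phi> u \<le> 0} = {}" by auto
  have "pseudo_inv \<phi> 0 = \<infinity>" unfolding pseudo_inv_def empty by (simp add: top_ereal_def)
  moreover have "(\<Sum>i<n. pseudo_inv \<phi> 0) = \<infinity>"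
    using calculation \<open>n \<ge> 2\<close> by (simp add: sum_Pinfty) (meson less_le_trans pos2)
  ultimately show ?thesis by (simp add: arch_copula_def gen_eval_def)
qed

lemma arch_copula_powr_le:
  fixes \<phi>1 \<phi>2 :: "real \<Rightarrow> real" and \<alpha> \<alpha>s :: "nat \<Rightarrow> real"
  assumes "n \<ge> 2" and \<alpha>: "\<forall>i<n. \<alpha> i > 0" and \<alpha>s: "\<forall>i<n. \<alpha>s i > 0"
    and g1: "archimedean_generator n \<phi>1" and g2: "archimedean_generator n \<phi>2"
    and lc: "log_convex \<phi>1 \<or> log_convex \<phi>2"
    and sa: "super_additive (\<lambda>x. pseudo_inv \<phi>2 (\<phi>1 x))"
    and prod_dom: "\<forall>j\<in>{1..n}. prod_list (take j (dec_arr n \<alpha>s)) \<le> prod_list (take j (dec_arr n \<alpha>))"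
    and "0 \<le> u" "u \<le> 1"
  shows "arch_copula \<phi>1 n (\<lambda>i. u powr \<alpha> i) \<le> arch_copula \<phi>2 n (\<lambda>i. u powr \<alpha>s i)"
proof -
  note copula_order = arch_copula_le_of_super_additive[OF g1 g2 \<open>n \<ge> 2\<close> sa]
  consider "u = 0" | "u = 1" | "0 < u" "u < 1" using \<open>0 \<le> u\<close> \<open>u \<le> 1\<close> by linarith
  then show ?thesis
  proof cases
    case 1
    then show ?thesis
      using arch_copula_zero[OF g1 \<open>n \<ge> 2\<close>]
        gen_eval_nonneg[OF g2, of "\<Sum>i<n. pseudo_inv \<phi>2 (0 powr \<alpha>s i)"]
      by (simp add: arch_copula_def sum_nonneg pseudo_inv_nonneg)
  next
    case 2
    then show ?thesis using copula_order[of n "\<lambda>_. 1"] by simp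
  next
    case 3
    have v: "\<And>i. i < n \<Longrightarrow> 0 < u powr \<alpha> i \<and> u powr \<alpha> i \<le> 1"
      and vs: "\<And>i. i < n \<Longrightarrow> 0 < u powr \<alpha>s i \<and> u powr \<alpha>s i \<le> 1"
      using powr_pos_lt_one[OF 3] \<alpha> \<alpha>s by (auto intro: less_imp_le)
    note majorized = arch_copula_powr_le_of_log_convex[OF _ \<open>n \<ge> 2\<close> _ 3 \<alpha> \<alpha>s prod_dom]
    from lc show ?thesis
      using order_trans[OF majorized[OF g1] copula_order[OF vs]]
        order_trans[OF copula_order[OF v] majorized[OF g2]]
      by blast
  qed
qed

lemma abs_cont_cdf_nonneg_bounds:
  assumes "abs_cont_cdf_nonneg G"
  shows "0 \<le> G t" "G t \<le> 1"
proof -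
  obtain g where g: "\<And>x. 0 \<le> g x" "(g has_integral 1) UNIV" "\<And>x. (g has_integral G x) {..x}"
    using assms by (auto simp: abs_cont_cdf_nonneg_def)
  show "0 \<le> G t" using has_integral_nonneg[OF g(3)[of t]] g(1) by auto
  show "G t \<le> 1" using has_integral_subset_le[OF _ g(3)[of t] g(2)] g(1) by auto
qed

lemma prob_Max_gt:
  fixes M :: "'a measure" and X :: "nat \<Rightarrow> 'a \<Rightarrow> real"
  assumes "prob_space M" and "n > 0" and X: "\<forall>i<n. X i \<in> borel_measurable M"
  shows "measure M {\<omega> \<in> space M. Max ((\<lambda>i. X i \<omega>) ` {..<n}) > t}
       = 1 - measure M {\<omega> \<in> space M. \<forall>i<n. X i \<omega> \<le> t}"
proof -
  define A where "A = {\<omega> \<in> space M. \<forall>i<n. X i \<omega> \<le> t}"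
  have "A = {\<omega> \<in> space M. \<forall>i\<in>{..<n}. X i \<omega> \<le> t}" by (auto simp: A_def)
  also have "\<dots> \<in> sets M"
    using X \<open>n > 0\<close> by (intro sets.sets_Collect_finite_All') (auto simp: borel_measurable_iff_le)
  finally have "A \<in> sets M" .
  have "Max ((\<lambda>i. X i \<omega>) ` {..<n}) > t \<longleftrightarrow> \<not> (\<forall>i<n. X i \<omega> \<le> t)" for \<omega>
    using \<open>n > 0\<close> by (subst Max_gr_iff) (auto simp: not_le)
  then have "{\<omega> \<in> space M. Max ((\<lambda>i. X i \<omega>) ` {..<n}) > t} = space M - A"
    unfolding A_def by blast
  then show ?thesis
    using prob_space.prob_compl[OF \<open>prob_space M\<close> \<open>A \<in> sets M\<close>] by (simp add: A_def)
qed
theorem mainTheorem14: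
  fixes n :: nat and G :: "real \<Rightarrow> real"
    and \<alpha> \<alpha>s :: "nat \<Rightarrow> real"
    and \<phi>1 \<phi>2 :: "real \<Rightarrow> real"
    and M :: "'a measure" and N :: "'b measure"
    and X :: "nat \<Rightarrow> 'a \<Rightarrow> real" and Xs :: "nat \<Rightarrow> 'b \<Rightarrow> real"
  assumes "n \<ge> 2"
    and "abs_cont_cdf_nonneg G"
    and "\<forall>i<n. \<alpha> i > 0" and "\<forall>i<n. \<alpha>s i > 0"
    and "archimedean_generator n \<phi>1" and "archimedean_generator n \<phi>2"
    and "prob_space M" and "prob_space N"
    and "\<forall>i<n. X i \<in> borel_measurable M" and "\<forall>i<n. Xs i \<in> borel_measurable N"
    and "\<forall>x::nat \<Rightarrow> real. measure M {\<omega> \<in> space M. \<forall>i<n. X i \<omega> \<le> x i}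
           = gen_eval \<phi>1 (\<Sum>i<n. pseudo_inv \<phi>1 (G (x i) powr \<alpha> i))"
    and "\<forall>x::nat \<Rightarrow> real. measure N {\<omega> \<in> space N. \<forall>i<n. Xs i \<omega> \<le> x i}
           = gen_eval \<phi>2 (\<Sum>i<n. pseudo_inv \<phi>2 (G (x i) powr \<alpha>s i))"
    and "log_convex \<phi>1 \<or> log_convex \<phi>2"
    and "super_additive (\<lambda>x. pseudo_inv \<phi>2 (\<phi>1 x))"
    and "\<forall>j\<in>{1..n}. prod_list (take j (dec_arr n \<alpha>s)) \<le> prod_list (take j (dec_arr n \<alpha>))"
  shows "\<forall>t. measure N {\<omega> \<in> space N. Max ((\<lambda>i. Xs i \<omega>) ` {..<n}) > t}
           \<le> measure M {\<omega> \<in> space M. Max ((\<lambda>i. X i \<omega>) ` {..<n}) > t}"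
proof
  fix t :: real
  have "n > 0" using \<open>n \<ge> 2\<close> by simp
  have "arch_copula \<phi>1 n (\<lambda>i. G t powr \<alpha> i) \<le> arch_copula \<phi>2 n (\<lambda>i. G t powr \<alpha>s i)"
    using assms(1,3-6,13-15) abs_cont_cdf_nonneg_bounds[OF assms(2)] by (rule arch_copula_powr_le)
  then show "measure N {\<omega> \<in> space N. Max ((\<lambda>i. Xs i \<omega>) ` {..<n}) > t}
           \<le> measure M {\<omega> \<in> space M. Max ((\<lambda>i. X i \<omega>) ` {..<n}) > t}"
    using prob_Max_gt[OF assms(7) \<open>n > 0\<close> assms(9)] prob_Max_gt[OF assms(8) \<open>n > 0\<close> assms(10)]
      assms(11,12)[rule_format, of "\<lambda>_. t"]
    by (simp add: arch_copula_def)
qed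

end
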